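(* Assume the demand is i.i.d. with pmf $P_X$. Let $\theta\in\mathcal P_S$, $\xi(w)=\sum_{(x,s):s-x=w}P_X(x)\theta(s)$, and suppose $S_1\sim\theta$. If the constant-distribution policy $\mathbf b=(b,b,\dots)$, $b\in\mathcal B$, is invariant for the initial distribution $\theta$, then for every horizon $T$, $$L_T(\mathbf b)=I(W_1;Y_1)=I(b;\xi).$$
   Context: $\mathcal X=\{0,\dots,m_x\}$, $\mathcal Y=\{0,\dots,m_y\}$, $\mathcal S=\{0,\dots,m_s\}$ with $m_x\le m_y$; $\mathcal W=\{s-x:s\in\mathcal S,x\in\mathcal X\}$; $\mathcal P_S$ the pmfs on $\mathcal S$; $\mathcal Y_\circ(w)=\{y\in\mathcal Y:w+y\in\mathcal S\}$; $\mathcal B$ the conditional pmfs $b(y\mid w)$ with $b(\mathcal Y_\circ(w)\mid w)=1$. Demand $X_t$ i.i.d. $\sim P_X$ independent of $S_1$. The constant-distribution policy $b$ draws $Y_t\sim b(\cdot\mid W_t)$ with $W_t=S_t-X_t$, and $S_{t+1}=S_t+Y_t-X_t$. Let $\theta_t(s)=P(S_t=s\mid Y^{t-1}=y^{t-1})$ and $\xi_t(w)=P(W_t=w\mid Y^{t-1}=y^{t-1})$. The policy $b$ is invariant for initial distribution $\theta_1$ if $\theta_t=\theta_1$ and $\xi_t=\xi_1$ for all $t$ (for all realizations $y^{t-1}$ of positive probability), where $\xi_1(w)=\sum_{(x,s):s-x=w}P_X(x)\theta_1(s)$. $L_T(\mathbf b)=\frac1TI(X^T,S_1;Y^T)$;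 $I(b;\xi)$ is the mutual information between $W\sim\xi$ and $Y\sim b(\cdot\mid W)$. *)

theory Defs
  imports Complex_Main
begin

definition Xset :: "nat \<Rightarrow> int set" where "Xset mx = {0..int mx}"
definition Yset :: "nat \<Rightarrow> int set" where "Yset my = {0..int my}"
definition Sset :: "nat \<Rightarrow> int set" where "Sset ms = {0..int ms}"
definition Wset :: "nat \<Rightarrow> nat \<Rightarrow> int set" where
  "Wset ms mx = {s - x | s x. s \<in> Sset ms \<and> x \<in> Xset mx}"
definition Ycirc :: "nat \<Rightarrow> nat \<Rightarrow> int \<Rightarrow> int set" where
  "Ycirc my ms w = {y \<in> Yset my. w + y \<in> Sset ms}"

definition is_pmf_on :: "'a set \<Rightarrow> ('a \<Rightarrow> real) \<Rightarrow> bool" where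
  "is_pmf_on A p \<longleftrightarrow> (\<forall>a\<in>A. p a \<ge> 0) \<and> (\<Sum>a\<in>A. p a) = 1"

text \<open>The class B of conditional pmfs b(y|w) (written b w y) with b(Y_circ(w)|w) = 1.\<close>
definition policy_class :: "nat \<Rightarrow> nat \<Rightarrow> nat \<Rightarrow> (int \<Rightarrow> int \<Rightarrow> real) set" where
  "policy_class mx my ms = {b. \<forall>w\<in>Wset ms mx. is_pmf_on (Yset my) (b w)
      \<and> (\<Sum>y\<in>Ycirc my ms w. b w y) = 1}"

definition seqs :: "'a set \<Rightarrow> nat \<Rightarrow> 'a list set" where
  "seqs A n = {xs. set xs \<subseteq> A \<and> length xs = n}"

text \<open>Path weight: P(X^n = xs, Y^n = ys | S_1 = s) under the constant policy b,
  with W_t = S_t - X_t, Y_t ~ b(.|W_t), S_{t+1} = W_t + Y_t.\<close>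
fun path_wt :: "(int \<Rightarrow> real) \<Rightarrow> (int \<Rightarrow> int \<Rightarrow> real) \<Rightarrow> int \<Rightarrow> int list \<Rightarrow> int list \<Rightarrow> real" where
  "path_wt PX b s [] [] = 1"
| "path_wt PX b s (x # xs) (y # ys) = PX x * b (s - x) y * path_wt PX b (s - x + y) xs ys"
| "path_wt PX b s _ _ = 0"

fun path_state :: "int \<Rightarrow> int list \<Rightarrow> int list \<Rightarrow> int" where
  "path_state s [] [] = s"
| "path_state s (x # xs) (y # ys) = path_state (s - x + y) xs ys"
| "path_state s _ _ = s"

definition joint :: "(int \<Rightarrow> real) \<Rightarrow> (int \<Rightarrow> real) \<Rightarrow> (int \<Rightarrow> int \<Rightarrow> real)
    \<Rightarrow> int \<Rightarrow> int list \<Rightarrow> int list \<Rightarrow> real" where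
  "joint PX \<theta> b s1 xs ys = \<theta> s1 * path_wt PX b s1 xs ys"

text \<open>P(S_t = s, Y^{t-1} = ys), where length ys = t - 1.\<close>
definition PS_Y :: "nat \<Rightarrow> nat \<Rightarrow> (int \<Rightarrow> real) \<Rightarrow> (int \<Rightarrow> real) \<Rightarrow> (int \<Rightarrow> int \<Rightarrow> real)
    \<Rightarrow> int \<Rightarrow> int list \<Rightarrow> real" where
  "PS_Y mx ms PX \<theta> b s ys = (\<Sum>s1\<in>Sset ms. \<Sum>xs\<in>seqs (Xset mx) (length ys).
      if path_state s1 xs ys = s then joint PX \<theta> b s1 xs ys else 0)"

text \<open>P(W_t = w, Y^{t-1} = ys), with X_t ~ PX drawn independently of the past.\<close>
definition PW_Y :: "nat \<Rightarrow> nat \<Rightarrow> (int \<Rightarrow> real) \<Rightarrow> (int \<Rightarrow> real) \<Rightarrow> (int \<Rightarrow> int \<Rightarrow> real)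
    \<Rightarrow> int \<Rightarrow> int list \<Rightarrow> real" where
  "PW_Y mx ms PX \<theta> b w ys = (\<Sum>s1\<in>Sset ms. \<Sum>xs\<in>seqs (Xset mx) (length ys). \<Sum>x\<in>Xset mx.
      if path_state s1 xs ys - x = w then joint PX \<theta> b s1 xs ys * PX x else 0)"

definition PY :: "nat \<Rightarrow> nat \<Rightarrow> (int \<Rightarrow> real) \<Rightarrow> (int \<Rightarrow> real) \<Rightarrow> (int \<Rightarrow> int \<Rightarrow> real)
    \<Rightarrow> int list \<Rightarrow> real" where
  "PY mx ms PX \<theta> b ys = (\<Sum>s1\<in>Sset ms. \<Sum>xs\<in>seqs (Xset mx) (length ys). joint PX \<theta> b s1 xs ys)"

definition xi_of :: "nat \<Rightarrow> nat \<Rightarrow> (int \<Rightarrow> real) \<Rightarrow> (int \<Rightarrow> real) \<Rightarrow> int \<Rightarrow> real" where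
  "xi_of mx ms PX \<theta> w = (\<Sum>(x, s)\<in>{(x, s). x \<in> Xset mx \<and> s \<in> Sset ms \<and> s - x = w}. PX x * \<theta> s)"

text \<open>Invariance: for all t \<ge> 1 and all y^{t-1} of positive probability,
  theta_t = theta_1 on S and xi_t = xi_1 on W.\<close>
definition invariant :: "nat \<Rightarrow> nat \<Rightarrow> nat \<Rightarrow> (int \<Rightarrow> real) \<Rightarrow> (int \<Rightarrow> real)
    \<Rightarrow> (int \<Rightarrow> int \<Rightarrow> real) \<Rightarrow> bool" where
  "invariant mx my ms PX \<theta> b \<longleftrightarrow>
    (\<forall>n. \<forall>ys\<in>seqs (Yset my) n. PY mx ms PX \<theta> b ys > 0 \<longrightarrow>
       (\<forall>s\<in>Sset ms. PS_Y mx ms PX \<theta> b s ys / PY mx ms PX \<theta> b ys = \<theta> s) \<and>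
       (\<forall>w\<in>Wset ms mx. PW_Y mx ms PX \<theta> b w ys / PY mx ms PX \<theta> b ys = xi_of mx ms PX \<theta> w))"

definition mutual_info :: "'a set \<Rightarrow> 'b set \<Rightarrow> ('a \<Rightarrow> 'b \<Rightarrow> real) \<Rightarrow> real" where
  "mutual_info A B p = (\<Sum>a\<in>A. \<Sum>c\<in>B.
     if p a c = 0 then 0
     else p a c * log 2 (p a c / ((\<Sum>c'\<in>B. p a c') * (\<Sum>a'\<in>A. p a' c))))"

text \<open>L_T(b) = (1/T) I(X^T, S_1; Y^T).\<close>
definition L_T :: "nat \<Rightarrow> nat \<Rightarrow> nat \<Rightarrow> (int \<Rightarrow> real) \<Rightarrow> (int \<Rightarrow> real) \<Rightarrow> (int \<Rightarrow> int \<Rightarrow> real)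
    \<Rightarrow> nat \<Rightarrow> real" where
  "L_T mx my ms PX \<theta> b T = (1 / real T) *
     mutual_info (Sset ms \<times> seqs (Xset mx) T) (seqs (Yset my) T)
       (\<lambda>(s1, xs) ys. joint PX \<theta> b s1 xs ys)"

definition I_W1Y1 :: "nat \<Rightarrow> nat \<Rightarrow> nat \<Rightarrow> (int \<Rightarrow> real) \<Rightarrow> (int \<Rightarrow> real) \<Rightarrow> (int \<Rightarrow> int \<Rightarrow> real) \<Rightarrow> real" where
  "I_W1Y1 mx my ms PX \<theta> b = mutual_info (Wset ms mx) (Yset my)
     (\<lambda>w y. \<Sum>s1\<in>Sset ms. \<Sum>x\<in>Xset mx. if s1 - x = w then joint PX \<theta> b s1 [x] [y] else 0)"

definition I_b_xi :: "int set \<Rightarrow> int set \<Rightarrow> (int \<Rightarrow> int \<Rightarrow> real) \<Rightarrow> (int \<Rightarrow> real) \<Rightarrow> real" where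
  "I_b_xi W Y b \<xi> = mutual_info W Y (\<lambda>w y. \<xi> w * b w y)"

end

theory Submission
  imports Defs
begin

(* Invariance means that the posterior of the state, and of W_t = S_t - X_t, given past orders is
   always theta, respectively xi. Hence P(Y^t) factorises as a product of the output pmf
   r(y) = sum_w xi(w) b(y|w), so the information density of (S_1, X^T) and Y^T splits into the sum
   of log(b(Y_t|W_t) / r(Y_t)). Invariance at t = 2 also makes theta stationary under one step of the
   chain, so each of the T terms has expectation I(b; xi). *)

lemma finite_seqs: "finite A \<Longrightarrow> finite (seqs A n)"
  unfolding seqs_def by (rule finite_lists_length_eq)

lemma seqs_0 [simp]: "seqs A 0 = {[]}"
  unfolding seqs_def by auto

lemma seqs_Suc: "seqs A (Suc n) = (\<lambda>(x, xs). x # xs) ` (A \<times> seqs A n)"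
  unfolding seqs_def by (auto simp: length_Suc_conv image_iff)

lemma seqs_snoc: "seqs A (Suc n) = (\<lambda>(xs, x). xs @ [x]) ` (seqs A n \<times> A)"
proof -
  have "zs \<in> (\<lambda>(xs, x). xs @ [x]) ` (seqs A n \<times> A)" if "zs \<in> seqs A (Suc n)" for zs
  proof -
    from that have "zs \<noteq> []" by (auto simp: seqs_def)
    then obtain xs x where "zs = xs @ [x]" by (metis rev_exhaust)
    with that show ?thesis by (auto simp: seqs_def image_iff)
  qed
  then show ?thesis by (auto simp: seqs_def)
qed

lemma sum_seqs_Suc:
  "(\<Sum>zs\<in>seqs A (Suc n). f zs) = (\<Sum>x\<in>A. \<Sum>xs\<in>seqs A n. f (x # xs))"
proof -
  have "inj_on (\<lambda>(x, xs). x # xs) (A \<times> seqs A n)" by (auto simp: inj_on_def)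
  then show ?thesis
    unfolding seqs_Suc by (simp add: sum.reindex sum.cartesian_product split_def)
qed

lemma sum_seqs_snoc:
  "(\<Sum>zs\<in>seqs A (Suc n). f zs) = (\<Sum>xs\<in>seqs A n. \<Sum>x\<in>A. f (xs @ [x]))"
proof -
  have "inj_on (\<lambda>(xs, x). xs @ [x]) (seqs A n \<times> A)" by (auto simp: inj_on_def)
  then show ?thesis
    unfolding seqs_snoc by (simp add: sum.reindex sum.cartesian_product split_def)
qed

lemma sum_swap3: "(\<Sum>a\<in>A. \<Sum>b\<in>B. \<Sum>c\<in>C. f a b c) = (\<Sum>c\<in>C. \<Sum>a\<in>A. \<Sum>b\<in>B. f a b c)"
proof -
  have "(\<Sum>a\<in>A. \<Sum>b\<in>B. \<Sum>c\<in>C. f a b c) = (\<Sum>a\<in>A. \<Sum>c\<in>C. \<Sum>b\<in>B. f a b c)"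
    by (rule sum.cong[OF refl], rule sum.swap)
  also have "\<dots> = (\<Sum>c\<in>C. \<Sum>a\<in>A. \<Sum>b\<in>B. f a b c)"
    by (rule sum.swap)
  finally show ?thesis .
qed

lemma mutual_info_cong:
  assumes "\<And>a c. a \<in> A \<Longrightarrow> c \<in> B \<Longrightarrow> p a c = q a c"
  shows "mutual_info A B p = mutual_info A B q"
  unfolding mutual_info_def using assms by (intro sum.cong refl) simp

lemma mutual_info_prod:
  "mutual_info (A \<times> B) C (\<lambda>(a, b) c. p a b c) =
   (\<Sum>a\<in>A. \<Sum>b\<in>B. \<Sum>c\<in>C. if p a b c = 0 then 0
      else p a b c * log 2 (p a b c / ((\<Sum>c'\<in>C. p a b c') * (\<Sum>a'\<in>A. \<Sum>b'\<in>B. p a' b' c))))"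
  unfolding mutual_info_def sum.cartesian_product' prod.case ..

lemma path_wt_snoc:
  "length xs = length ys \<Longrightarrow> path_wt PX b s (xs @ [x]) (ys @ [y])
     = path_wt PX b s xs ys * (PX x * b (path_state s xs ys - x) y)"
proof (induction xs arbitrary: ys s)
  case (Cons a xs) then show ?case by (cases ys) auto
qed simp

lemma path_wt_nonzero_imp_PX_nonzero:
  "path_wt PX b s xs ys \<noteq> 0 \<Longrightarrow> x \<in> set xs \<Longrightarrow> PX x \<noteq> 0"
proof (induction xs arbitrary: s ys)
  case (Cons x xs) then show ?case by (cases ys) auto
qed simp

fun info_density ::
  "(int \<Rightarrow> real) \<Rightarrow> (int \<Rightarrow> int \<Rightarrow> real) \<Rightarrow> int \<Rightarrow> int list \<Rightarrow> int list \<Rightarrow> real"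
where
  "info_density r b s (x # xs) (y # ys) = log 2 (b (s - x) y / r y) + info_density r b (s - x + y) xs ys"
| "info_density r b s _ _ = 0"

lemma log_path_wt_ratio:
  assumes "path_wt PX b s xs ys \<noteq> 0" "\<And>y. y \<in> set ys \<Longrightarrow> r y \<noteq> 0"
  shows "log 2 (path_wt PX b s xs ys / (prod_list (map PX xs) * prod_list (map r ys)))
       = info_density r b s xs ys"
  using assms
proof (induction xs arbitrary: s ys)
  case Nil then show ?case by (cases ys) auto
next
  case (Cons x xs)
  then obtain y ys' where ys: "ys = y # ys'" by (cases ys) auto
  let ?p = "path_wt PX b (s - x + y) xs ys'"
  have nz: "PX x \<noteq> 0" "b (s - x) y \<noteq> 0" "?p \<noteq> 0" "r y \<noteq> 0"
    using Cons.prems ys by auto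
  have P: "prod_list (map PX xs) \<noteq> 0"
    using path_wt_nonzero_imp_PX_nonzero[OF nz(3)] by (auto simp: prod_list_zero_iff)
  have R: "prod_list (map r ys') \<noteq> 0" using Cons.prems ys by (auto simp: prod_list_zero_iff)
  have ratio: "path_wt PX b s (x # xs) ys / (prod_list (map PX (x # xs)) * prod_list (map r ys))
      = (b (s - x) y / r y) * (?p / (prod_list (map PX xs) * prod_list (map r ys')))"
    using nz by (simp add: ys field_simps)
  have "log 2 (path_wt PX b s (x # xs) ys / (prod_list (map PX (x # xs)) * prod_list (map r ys)))
      = log 2 (b (s - x) y / r y) + log 2 (?p / (prod_list (map PX xs) * prod_list (map r ys')))"
    unfolding ratio by (subst log_mult) (simp_all add: nz P R)
  then show ?case using Cons.IH[OF nz(3)] Cons.prems ys by simp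
qed

locale inventory_policy =
  fixes mx my ms :: nat and PX \<theta> :: "int \<Rightarrow> real" and b :: "int \<Rightarrow> int \<Rightarrow> real"
  assumes PX_pmf: "is_pmf_on (Xset mx) PX"
    and \<theta>_pmf: "is_pmf_on (Sset ms) \<theta>"
    and b_policy: "b \<in> policy_class mx my ms"
begin

abbreviation "X \<equiv> Xset mx"
abbreviation "Y \<equiv> Yset my"
abbreviation "S \<equiv> Sset ms"
abbreviation "W \<equiv> Wset ms mx"
abbreviation "\<xi> \<equiv> xi_of mx ms PX \<theta>"
abbreviation "pw \<equiv> path_wt PX b"

definition out_pmf :: "int \<Rightarrow> real" where
  "out_pmf y = (\<Sum>w\<in>W. \<xi> w * b w y)"

lemma finite_X [simp]: "finite X" and finite_Y [simp]: "finite Y" and finite_S [simp]: "finite S"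
  by (simp_all add: Xset_def Yset_def Sset_def)

lemma finite_W [simp]: "finite W"
proof -
  have "W = (\<lambda>(s, x). s - x) ` (S \<times> X)" by (auto simp: Wset_def)
  then show ?thesis by simp
qed

lemma diff_in_W: "s \<in> S \<Longrightarrow> x \<in> X \<Longrightarrow> s - x \<in> W"
  by (auto simp: Wset_def)

lemma PX_nonneg: "x \<in> X \<Longrightarrow> PX x \<ge> 0" and sum_PX: "(\<Sum>x\<in>X. PX x) = 1"
  using PX_pmf by (simp_all add: is_pmf_on_def)

lemma \<theta>_nonneg: "s \<in> S \<Longrightarrow> \<theta> s \<ge> 0" and sum_\<theta>: "(\<Sum>s\<in>S. \<theta> s) = 1"
  using \<theta>_pmf by (simp_all add: is_pmf_on_def)

lemma b_nonneg: "w \<in> W \<Longrightarrow> y \<in> Y \<Longrightarrow> b w y \<ge> 0"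
  and sum_b: "w \<in> W \<Longrightarrow> (\<Sum>y\<in>Y. b w y) = 1"
  using b_policy by (simp_all add: policy_class_def is_pmf_on_def)

lemma b_eq_0_outside_Ycirc:
  assumes w: "w \<in> W" and y: "y \<in> Y" "y \<notin> Ycirc my ms w"
  shows "b w y = 0"
proof -
  have "Ycirc my ms w \<subseteq> Y" by (auto simp: Ycirc_def)
  then have "(\<Sum>y\<in>Y. b w y) = (\<Sum>y\<in>Ycirc my ms w. b w y) + (\<Sum>y\<in>Y - Ycirc my ms w. b w y)"
    by (simp add: sum.subset_diff)
  moreover have "(\<Sum>y\<in>Ycirc my ms w. b w y) = 1" using b_policy w by (simp add: policy_class_def)
  ultimately have "(\<Sum>y\<in>Y - Ycirc my ms w. b w y) = 0" using sum_b[OF w] by simp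
  with y show ?thesis using sum_nonneg_eq_0_iff[of "Y - Ycirc my ms w" "b w"] b_nonneg[OF w] by auto
qed

lemma next_state_in_S:
  "s \<in> S \<Longrightarrow> x \<in> X \<Longrightarrow> y \<in> Y \<Longrightarrow> b (s - x) y \<noteq> 0 \<Longrightarrow> s - x + y \<in> S"
  using b_eq_0_outside_Ycirc diff_in_W by (force simp: Ycirc_def)

lemma path_wt_nonneg: "s \<in> S \<Longrightarrow> set xs \<subseteq> X \<Longrightarrow> set ys \<subseteq> Y \<Longrightarrow> pw s xs ys \<ge> 0"
proof (induction xs arbitrary: ys s)
  case Nil then show ?case by (cases ys) simp_all
next
  case (Cons x xs)
  show ?case
  proof (cases ys)
    case (Cons y ys')
    show ?thesis
    proof (cases "b (s - x) y = 0")
      case False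
      with Cons.prems \<open>ys = y # ys'\<close> have "s - x + y \<in> S" by (auto intro: next_state_in_S)
      with Cons.IH Cons.prems \<open>ys = y # ys'\<close> show ?thesis
        by (auto intro!: mult_nonneg_nonneg PX_nonneg b_nonneg diff_in_W)
    qed (simp add: Cons)
  qed simp
qed

lemma path_state_in_S:
  "s \<in> S \<Longrightarrow> set xs \<subseteq> X \<Longrightarrow> set ys \<subseteq> Y \<Longrightarrow> pw s xs ys \<noteq> 0 \<Longrightarrow> path_state s xs ys \<in> S"
proof (induction xs arbitrary: ys s)
  case Nil then show ?case by (cases ys) simp_all
next
  case (Cons x xs)
  then show ?case by (cases ys) (auto intro: next_state_in_S)
qed

lemma sum_path_wt_orders:
  "s \<in> S \<Longrightarrow> set xs \<subseteq> X \<Longrightarrow> (\<Sum>ys\<in>seqs Y (length xs). pw s xs ys) = prod_list (map PX xs)"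
proof (induction xs arbitrary: s)
  case (Cons x xs)
  have "(\<Sum>ys\<in>seqs Y (length (x # xs)). pw s (x # xs) ys)
      = (\<Sum>y\<in>Y. PX x * b (s - x) y * (\<Sum>ys\<in>seqs Y (length xs). pw (s - x + y) xs ys))"
    by (simp add: sum_seqs_Suc sum_distrib_left)
  also have "\<dots> = (\<Sum>y\<in>Y. PX x * b (s - x) y * prod_list (map PX xs))"
    by (intro sum.cong refl) (use Cons.IH Cons.prems next_state_in_S in fastforce)
  also have "\<dots> = PX x * prod_list (map PX xs) * (\<Sum>y\<in>Y. b (s - x) y)"
    by (simp add: sum_distrib_left mult_ac)
  also have "\<dots> = prod_list (map PX (x # xs))"
    using sum_b diff_in_W Cons.prems by simp
  finally show ?case .
qed simp

lemma sum_prod_PX: "(\<Sum>xs\<in>seqs X n. prod_list (map PX xs)) = 1"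
  by (induction n) (simp_all add: sum_seqs_Suc sum_PX flip: sum_distrib_left sum_distrib_right)

lemma sum_path_wt:
  assumes "s \<in> S" shows "(\<Sum>xs\<in>seqs X n. \<Sum>ys\<in>seqs Y n. pw s xs ys) = 1"
proof -
  have "(\<Sum>xs\<in>seqs X n. \<Sum>ys\<in>seqs Y n. pw s xs ys) = (\<Sum>xs\<in>seqs X n. prod_list (map PX xs))"
    using sum_path_wt_orders[OF assms] by (intro sum.cong refl) (auto simp: seqs_def)
  then show ?thesis by (simp add: sum_prod_PX)
qed

lemma xi_of_eq: "\<xi> w = (\<Sum>s\<in>S. \<Sum>x\<in>X. if s - x = w then \<theta> s * PX x else 0)"
proof -
  have "{(x, s). x \<in> X \<and> s \<in> S \<and> s - x = w} = {p \<in> X \<times> S. snd p - fst p = w}" by auto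
  then have "\<xi> w = (\<Sum>p\<in>X \<times> S. if snd p - fst p = w then PX (fst p) * \<theta> (snd p) else 0)"
    unfolding xi_of_def by (simp add: sum.inter_filter split_def)
  also have "\<dots> = (\<Sum>x\<in>X. \<Sum>s\<in>S. if s - x = w then \<theta> s * PX x else 0)"
    by (simp add: sum.cartesian_product split_def mult.commute cong: if_cong)
  finally show ?thesis by (simp add: sum.swap[of _ X])
qed

lemma sum_W_reindex: "(\<Sum>w\<in>W. \<xi> w * f w) = (\<Sum>s\<in>S. \<Sum>x\<in>X. \<theta> s * PX x * f (s - x))"
proof -
  have "(\<Sum>w\<in>W. \<xi> w * f w) = (\<Sum>w\<in>W. \<Sum>s\<in>S. \<Sum>x\<in>X. if s - x = w then \<theta> s * PX x * f w else 0)"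
    unfolding xi_of_eq sum_distrib_right by (intro sum.cong refl) simp
  also have "\<dots> = (\<Sum>s\<in>S. \<Sum>x\<in>X. \<Sum>w\<in>W. if s - x = w then \<theta> s * PX x * f w else 0)"
    by (rule sum_swap3[symmetric])
  also have "\<dots> = (\<Sum>s\<in>S. \<Sum>x\<in>X. \<theta> s * PX x * f (s - x))"
    by (intro sum.cong refl) (simp add: diff_in_W)
  finally show ?thesis .
qed

lemma sum_out_pmf: "(\<Sum>y\<in>Y. out_pmf y) = 1"
proof -
  have "(\<Sum>y\<in>Y. out_pmf y) = (\<Sum>w\<in>W. \<xi> w * 1)"
    unfolding out_pmf_def by (subst sum.swap) (simp add: sum_b flip: sum_distrib_left)
  also have "\<dots> = 1"
    unfolding sum_W_reindex by (simp add: sum_PX sum_\<theta> flip: sum_distrib_left sum_distrib_right)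
  finally show ?thesis .
qed

lemma I_b_xi_eq: "I_b_xi W Y b \<xi> = (\<Sum>w\<in>W. \<Sum>y\<in>Y. \<xi> w * b w y * log 2 (b w y / out_pmf y))"
  unfolding I_b_xi_def mutual_info_def
proof (intro sum.cong refl)
  fix w y assume "w \<in> W" "y \<in> Y"
  then have "(\<Sum>y'\<in>Y. \<xi> w * b w y') = \<xi> w" by (simp add: sum_b flip: sum_distrib_left)
  then show "(if \<xi> w * b w y = 0 then 0 else \<xi> w * b w y * log 2 (\<xi> w * b w y /
        ((\<Sum>y'\<in>Y. \<xi> w * b w y') * (\<Sum>w'\<in>W. \<xi> w' * b w' y))))
      = \<xi> w * b w y * log 2 (b w y / out_pmf y)"
    by (simp add: out_pmf_def)
qed

lemma I_W1Y1_eq_I_b_xi: "I_W1Y1 mx my ms PX \<theta> b = I_b_xi W Y b \<xi>"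
  unfolding I_W1Y1_def I_b_xi_def
proof (rule mutual_info_cong)
  fix w y
  show "(\<Sum>s\<in>S. \<Sum>x\<in>X. if s - x = w then joint PX \<theta> b s [x] [y] else 0) = \<xi> w * b w y"
    unfolding xi_of_eq sum_distrib_right joint_def by (intro sum.cong refl) auto
qed


abbreviation "PY' \<equiv> PY mx ms PX \<theta> b"
abbreviation "PS' \<equiv> PS_Y mx ms PX \<theta> b"
abbreviation "PW' \<equiv> PW_Y mx ms PX \<theta> b"

lemma joint_nonneg: "s \<in> S \<Longrightarrow> set xs \<subseteq> X \<Longrightarrow> set ys \<subseteq> Y \<Longrightarrow> joint PX \<theta> b s xs ys \<ge> 0"
  by (simp add: joint_def path_wt_nonneg \<theta>_nonneg)

lemma joint_le_PY:
  assumes "s \<in> S" "xs \<in> seqs X (length ys)" "set ys \<subseteq> Y"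
  shows "joint PX \<theta> b s xs ys \<le> PY' ys"
proof -
  have nn: "\<And>s xs. s \<in> S \<Longrightarrow> xs \<in> seqs X (length ys) \<Longrightarrow> joint PX \<theta> b s xs ys \<ge> 0"
    using assms(3) by (simp add: joint_nonneg seqs_def)
  have "joint PX \<theta> b s xs ys \<le> (\<Sum>xs'\<in>seqs X (length ys). joint PX \<theta> b s xs' ys)"
    using assms nn by (intro member_le_sum) (simp_all add: finite_seqs)
  also have "\<dots> \<le> PY' ys"
    unfolding PY_def using assms nn
    by (intro member_le_sum[where f = "\<lambda>s. \<Sum>xs'\<in>seqs X (length ys). joint PX \<theta> b s xs' ys"] sum_nonneg)
      simp_all
  finally show ?thesis .
qed

lemma PY_nonneg: "set ys \<subseteq> Y \<Longrightarrow> PY' ys \<ge> 0"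
  unfolding PY_def by (auto intro!: sum_nonneg joint_nonneg simp: seqs_def)

lemma PS_Y_nonneg: "set ys \<subseteq> Y \<Longrightarrow> PS' s ys \<ge> 0"
  and PS_Y_le_PY: "set ys \<subseteq> Y \<Longrightarrow> PS' s ys \<le> PY' ys"
  unfolding PS_Y_def PY_def by (auto intro!: sum_nonneg sum_mono joint_nonneg simp: seqs_def)

lemma PW_Y_nonneg: "set ys \<subseteq> Y \<Longrightarrow> PW' w ys \<ge> 0"
  and PW_Y_le_PY: "set ys \<subseteq> Y \<Longrightarrow> PW' w ys \<le> PY' ys"
proof -
  assume ys: "set ys \<subseteq> Y"
  then have nn: "\<And>s xs x. s \<in> S \<Longrightarrow> xs \<in> seqs X (length ys) \<Longrightarrow> x \<in> X
      \<Longrightarrow> 0 \<le> joint PX \<theta> b s xs ys * PX x"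
    by (simp add: joint_nonneg PX_nonneg seqs_def)
  then show "PW' w ys \<ge> 0" unfolding PW_Y_def by (auto intro!: sum_nonneg)
  have "PW' w ys \<le> (\<Sum>s\<in>S. \<Sum>xs\<in>seqs X (length ys). \<Sum>x\<in>X. joint PX \<theta> b s xs ys * PX x)"
    unfolding PW_Y_def using nn by (intro sum_mono) auto
  also have "\<dots> = PY' ys"
    unfolding PY_def by (simp add: sum_PX flip: sum_distrib_left)
  finally show "PW' w ys \<le> PY' ys" .
qed

lemma PY_snoc:
  assumes ys: "set ys \<subseteq> Y"
  shows "PY' (ys @ [y]) = (\<Sum>w\<in>W. PW' w ys * b w y)"
proof -
  let ?st = "\<lambda>s xs. path_state s xs ys"
  let ?j = "\<lambda>s xs. joint PX \<theta> b s xs ys"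
  have "PY' (ys @ [y]) = (\<Sum>s\<in>S. \<Sum>xs\<in>seqs X (length ys). \<Sum>x\<in>X. joint PX \<theta> b s (xs @ [x]) (ys @ [y]))"
    unfolding PY_def by (simp add: sum_seqs_snoc)
  also have "\<dots> = (\<Sum>s\<in>S. \<Sum>xs\<in>seqs X (length ys). \<Sum>x\<in>X. ?j s xs * PX x * b (?st s xs - x) y)"
    by (intro sum.cong refl) (simp add: joint_def path_wt_snoc seqs_def)
  also have "\<dots> = (\<Sum>s\<in>S. \<Sum>xs\<in>seqs X (length ys). \<Sum>x\<in>X. \<Sum>w\<in>W.
      if ?st s xs - x = w then ?j s xs * PX x * b w y else 0)"
  proof (intro sum.cong refl)
    fix s xs x assume h: "s \<in> S" "xs \<in> seqs X (length ys)" "x \<in> X"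
    show "?j s xs * PX x * b (?st s xs - x) y = (\<Sum>w\<in>W. if ?st s xs - x = w then ?j s xs * PX x * b w y else 0)"
    proof (cases "?j s xs = 0")
      case False
      then have "?st s xs \<in> S" using path_state_in_S h ys by (auto simp: joint_def seqs_def)
      then show ?thesis using diff_in_W h by simp
    qed simp
  qed
  also have "\<dots> = (\<Sum>s\<in>S. \<Sum>w\<in>W. \<Sum>xs\<in>seqs X (length ys). \<Sum>x\<in>X.
      if ?st s xs - x = w then ?j s xs * PX x * b w y else 0)"
    by (rule sum.cong[OF refl], rule sum_swap3)
  also have "\<dots> = (\<Sum>w\<in>W. \<Sum>s\<in>S. \<Sum>xs\<in>seqs X (length ys). \<Sum>x\<in>X.
      if ?st s xs - x = w then ?j s xs * PX x * b w y else 0)"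
    by (rule sum.swap)
  also have "\<dots> = (\<Sum>w\<in>W. PW' w ys * b w y)"
    unfolding PW_Y_def sum_distrib_right by (intro sum.cong refl) simp
  finally show ?thesis .
qed


definition cond_info :: "nat \<Rightarrow> int \<Rightarrow> real" where
  "cond_info T s = (\<Sum>xs\<in>seqs X T. \<Sum>ys\<in>seqs Y T. pw s xs ys * info_density out_pmf b s xs ys)"

lemma cond_info_0 [simp]: "cond_info 0 s = 0"
  by (simp add: cond_info_def)

lemma cond_info_Suc:
  assumes s: "s \<in> S"
  shows "cond_info (Suc T) s = (\<Sum>x\<in>X. \<Sum>y\<in>Y.
    PX x * b (s - x) y * (log 2 (b (s - x) y / out_pmf y) + cond_info T (s - x + y)))"
proof -
  let ?d = "\<lambda>x y xs ys. pw (s - x + y) xs ys * (log 2 (b (s - x) y / out_pmf y)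
    + info_density out_pmf b (s - x + y) xs ys)"
  have "cond_info (Suc T) s = (\<Sum>x\<in>X. \<Sum>xs\<in>seqs X T. \<Sum>y\<in>Y. \<Sum>ys\<in>seqs Y T. PX x * b (s - x) y * ?d x y xs ys)"
    unfolding cond_info_def by (simp add: sum_seqs_Suc mult_ac)
  also have "\<dots> = (\<Sum>x\<in>X. \<Sum>y\<in>Y. PX x * b (s - x) y * (\<Sum>xs\<in>seqs X T. \<Sum>ys\<in>seqs Y T. ?d x y xs ys))"
    by (subst sum.swap) (simp add: sum_distrib_left)
  also have "\<dots> = (\<Sum>x\<in>X. \<Sum>y\<in>Y.
      PX x * b (s - x) y * (log 2 (b (s - x) y / out_pmf y) + cond_info T (s - x + y)))"
  proof (intro sum.cong refl)
    fix x y assume "x \<in> X" "y \<in> Y"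
    with s have "b (s - x) y \<noteq> 0 \<Longrightarrow> (\<Sum>xs\<in>seqs X T. \<Sum>ys\<in>seqs Y T. pw (s - x + y) xs ys) = 1"
      by (simp add: next_state_in_S sum_path_wt)
    then show "PX x * b (s - x) y * (\<Sum>xs\<in>seqs X T. \<Sum>ys\<in>seqs Y T. ?d x y xs ys)
        = PX x * b (s - x) y * (log 2 (b (s - x) y / out_pmf y) + cond_info T (s - x + y))"
      unfolding cond_info_def
      by (cases "b (s - x) y = 0")
        (simp_all add: distrib_left sum.distrib flip: sum_distrib_left sum_distrib_right)
  qed
  finally show ?thesis .
qed

end

locale invariant_inventory_policy = inventory_policy +
  assumes invariant: "invariant mx my ms PX \<theta> b"
begin

lemma PS_Y_eq:
  assumes ys: "set ys \<subseteq> Y" and s: "s \<in> S"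
  shows "PS' s ys = \<theta> s * PY' ys"
proof (cases "PY' ys = 0")
  case True
  then show ?thesis using PS_Y_nonneg[OF ys] PS_Y_le_PY[OF ys] by (simp add: order_antisym)
next
  case False
  with PY_nonneg[OF ys] have "PY' ys > 0" by simp
  moreover have "ys \<in> seqs Y (length ys)" using ys by (simp add: seqs_def)
  ultimately have "PS' s ys / PY' ys = \<theta> s" using invariant s unfolding invariant_def by blast
  with False show ?thesis by (simp add: field_simps)
qed

lemma PW_Y_eq:
  assumes ys: "set ys \<subseteq> Y" and w: "w \<in> W"
  shows "PW' w ys = \<xi> w * PY' ys"
proof (cases "PY' ys = 0")
  case True
  then show ?thesis using PW_Y_nonneg[OF ys] PW_Y_le_PY[OF ys] by (simp add: order_antisym)
next
  case False
  with PY_nonneg[OF ys] have "PY' ys > 0" by simp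
  moreover have "ys \<in> seqs Y (length ys)" using ys by (simp add: seqs_def)
  ultimately have "PW' w ys / PY' ys = \<xi> w" using invariant w unfolding invariant_def by blast
  with False show ?thesis by (simp add: field_simps)
qed

lemma PY_snoc_eq: "set ys \<subseteq> Y \<Longrightarrow> PY' (ys @ [y]) = PY' ys * out_pmf y"
  by (simp add: PY_snoc PW_Y_eq out_pmf_def sum_distrib_left mult_ac cong: sum.cong)

lemma PY_eq_prod_out_pmf: "set ys \<subseteq> Y \<Longrightarrow> PY' ys = prod_list (map out_pmf ys)"
proof (induction ys rule: rev_induct)
  case Nil
  then show ?case by (simp add: PY_def joint_def sum_\<theta>)
next
  case (snoc y ys)
  then show ?case by (simp add: PY_snoc_eq)
qed

lemma next_state_distribution:
  assumes "y \<in> Y" "s' \<in> S"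
  shows "(\<Sum>s\<in>S. \<Sum>x\<in>X. if s - x + y = s' then \<theta> s * PX x * b (s - x) y else 0) = \<theta> s' * out_pmf y"
proof -
  have "PS' s' [y] = (\<Sum>s\<in>S. \<Sum>x\<in>X. if s - x + y = s' then \<theta> s * PX x * b (s - x) y else 0)"
    unfolding PS_Y_def joint_def by (simp add: sum_seqs_Suc mult.assoc cong: if_cong)
  with assms show ?thesis using PS_Y_eq[of "[y]" s'] PY_eq_prod_out_pmf[of "[y]"] by simp
qed

lemma sum_next_state:
  "(\<Sum>s\<in>S. \<Sum>x\<in>X. \<Sum>y\<in>Y. \<theta> s * PX x * b (s - x) y * f (s - x + y)) = (\<Sum>s\<in>S. \<theta> s * f s)"
proof -
  have "(\<Sum>s\<in>S. \<Sum>x\<in>X. \<theta> s * PX x * b (s - x) y * f (s - x + y)) = out_pmf y * (\<Sum>s\<in>S. \<theta> s * f s)"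
    if y: "y \<in> Y" for y
  proof -
    have "(\<Sum>s\<in>S. \<Sum>x\<in>X. \<theta> s * PX x * b (s - x) y * f (s - x + y))
        = (\<Sum>s\<in>S. \<Sum>x\<in>X. \<Sum>s'\<in>S. if s - x + y = s' then \<theta> s * PX x * b (s - x) y * f s' else 0)"
      by (intro sum.cong refl) (use next_state_in_S y in auto)
    also have "\<dots> = (\<Sum>s'\<in>S. (\<Sum>s\<in>S. \<Sum>x\<in>X. if s - x + y = s' then \<theta> s * PX x * b (s - x) y else 0) * f s')"
      unfolding sum_distrib_right by (subst sum_swap3) (intro sum.cong refl, simp)
    also have "\<dots> = out_pmf y * (\<Sum>s\<in>S. \<theta> s * f s)"
      using y by (simp add: next_state_distribution sum_distrib_left mult_ac)
    finally show ?thesis .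
  qed
  then have "(\<Sum>s\<in>S. \<Sum>x\<in>X. \<Sum>y\<in>Y. \<theta> s * PX x * b (s - x) y * f (s - x + y))
      = (\<Sum>y\<in>Y. out_pmf y) * (\<Sum>s\<in>S. \<theta> s * f s)"
    by (subst sum_swap3) (simp add: sum_distrib_right)
  then show ?thesis by (simp add: sum_out_pmf)
qed

lemma sum_cond_info: "(\<Sum>s\<in>S. \<theta> s * cond_info T s) = real T * I_b_xi W Y b \<xi>"
proof (induction T)
  case (Suc T)
  have "(\<Sum>s\<in>S. \<theta> s * cond_info (Suc T) s)
      = (\<Sum>s\<in>S. \<Sum>x\<in>X. \<theta> s * PX x * (\<Sum>y\<in>Y. b (s - x) y * log 2 (b (s - x) y / out_pmf y)))
      + (\<Sum>s\<in>S. \<Sum>x\<in>X. \<Sum>y\<in>Y. \<theta> s * PX x * b (s - x) y * cond_info T (s - x + y))"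
    by (simp add: cond_info_Suc sum_distrib_left distrib_left sum.distrib mult_ac cong: sum.cong)
  also have "\<dots> = I_b_xi W Y b \<xi> + (\<Sum>s\<in>S. \<theta> s * cond_info T s)"
    unfolding sum_next_state I_b_xi_eq
      sum_W_reindex[of "\<lambda>w. \<Sum>y\<in>Y. b w y * log 2 (b w y / out_pmf y)", symmetric]
    by (simp add: sum_distrib_left mult_ac)
  finally show ?case using Suc by (simp add: algebra_simps)
qed simp


lemma out_pmf_nonzero:
  assumes "s \<in> S" "xs \<in> seqs X (length ys)" "set ys \<subseteq> Y" "joint PX \<theta> b s xs ys \<noteq> 0" "y \<in> set ys"
  shows "out_pmf y \<noteq> 0"
proof -
  have "0 < joint PX \<theta> b s xs ys"
    using assms joint_nonneg[of s xs ys] by (simp add: seqs_def less_le)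
  also have "\<dots> \<le> PY' ys" using assms by (intro joint_le_PY)
  finally have "prod_list (map out_pmf ys) \<noteq> 0" using assms(3) by (simp add: PY_eq_prod_out_pmf)
  then show ?thesis using assms(5) by (auto simp: prod_list_zero_iff)
qed

lemma mutual_info_joint:
  "mutual_info (S \<times> seqs X T) (seqs Y T) (\<lambda>(s, xs) ys. joint PX \<theta> b s xs ys)
     = (\<Sum>s\<in>S. \<theta> s * cond_info T s)"
proof -
  have "(if joint PX \<theta> b s xs ys = 0 then 0 else joint PX \<theta> b s xs ys * log 2 (joint PX \<theta> b s xs ys /
          ((\<Sum>ys'\<in>seqs Y T. joint PX \<theta> b s xs ys') * (\<Sum>s'\<in>S. \<Sum>xs'\<in>seqs X T. joint PX \<theta> b s' xs' ys))))
      = \<theta> s * (pw s xs ys * info_density out_pmf b s xs ys)"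
    if h: "s \<in> S" "xs \<in> seqs X T" "ys \<in> seqs Y T" for s xs ys
  proof (cases "joint PX \<theta> b s xs ys = 0")
    case True
    then show ?thesis by (auto simp: joint_def)
  next
    case False
    have xs: "set xs \<subseteq> X" "length xs = T" and ys: "set ys \<subseteq> Y" "length ys = T"
      using h by (auto simp: seqs_def)
    have "(\<Sum>ys'\<in>seqs Y T. joint PX \<theta> b s xs ys') = \<theta> s * prod_list (map PX xs)"
      using sum_path_wt_orders[OF h(1) xs(1)] xs(2) by (simp add: joint_def flip: sum_distrib_left)
    moreover have "(\<Sum>s'\<in>S. \<Sum>xs'\<in>seqs X T. joint PX \<theta> b s' xs' ys) = prod_list (map out_pmf ys)"
      using PY_eq_prod_out_pmf[OF ys(1)] ys(2) by (simp add: PY_def)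
    moreover have "log 2 (pw s xs ys / (prod_list (map PX xs) * prod_list (map out_pmf ys)))
        = info_density out_pmf b s xs ys"
      using False h ys out_pmf_nonzero[of s xs ys] by (intro log_path_wt_ratio) (auto simp: joint_def)
    ultimately show ?thesis using False by (simp add: joint_def mult.assoc)
  qed
  then show ?thesis
    unfolding mutual_info_prod cond_info_def by (simp add: sum_distrib_left cong: sum.cong)
qed

end

theorem lemma6:
  fixes mx my ms :: nat and PX \<theta> :: "int \<Rightarrow> real" and b :: "int \<Rightarrow> int \<Rightarrow> real" and T :: nat
  assumes "mx \<le> my"
    and "is_pmf_on (Xset mx) PX"
    and "is_pmf_on (Sset ms) \<theta>"
    and "b \<in> policy_class mx my ms"
    and "invariant mx my ms PX \<theta> b"
    and "T \<ge> 1"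
  shows "L_T mx my ms PX \<theta> b T = I_W1Y1 mx my ms PX \<theta> b
       \<and> I_W1Y1 mx my ms PX \<theta> b = I_b_xi (Wset ms mx) (Yset my) b (xi_of mx ms PX \<theta>)"
proof -
  interpret invariant_inventory_policy mx my ms PX \<theta> b
    using assms by unfold_locales
  have "L_T mx my ms PX \<theta> b T = I_b_xi (Wset ms mx) (Yset my) b (xi_of mx ms PX \<theta>)"
    using \<open>T \<ge> 1\<close> by (simp add: L_T_def mutual_info_joint sum_cond_info)
  with I_W1Y1_eq_I_b_xi show ?thesis by simp
qed

end
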